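(* Let $\rho_{i\to j}(e)$ be a subexpression of the clique-width $k$-expression $e_G$ and let $C,N\in[0,\mathcal{N}]^{k\times q}$. Let $N_e$ be defined by $N_e[i,a]=N[j,a]$ for every color $a$ and $N_e[h,a]=N[h,a]$ for every $h\in[1,k]\setminus\{i\}$ and every color $a$. If $C[i,a]=0$ for all $a\in\mathrm{Colors}$, then $\lambda(\rho_{i\to j}(e),C,N)$ equals the minimum of $\lambda(e,C_e,N_e)$ over all $C_e\in[0,\mathcal{N}]^{k\times q}$ such that $C[j,a]=\min(\mathcal{N},C_e[i,a]+C_e[j,a])$ for all colors $a$ and $C_e[h,a]=C[h,a]$ for all $h\in[1,k]\setminus\{i,j\}$ and all colors $a$. Otherwise, $\lambda(\rho_{i\to j}(e),C,N)=\mathrm{Error}$.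
   Context: Weight set: $(\mathrm{Weights},\preceq,\circledast)$ where $\preceq$ is a total order with a maximum element $\mathrm{Error}$, $\min$ is the minimum w.r.t. $\preceq$ (minimum of an empty set is $\mathrm{Error}$), and $\circledast$ is commutative, associative, has a neutral element, has absorbing element $\mathrm{Error}$, and is monotone. A color-counting 1-locally checkable problem is given by a graph $G$, colors $\mathrm{Colors}=\{a_1,\ldots,a_q\}$, nonempty lists $L_v\subseteq\mathrm{Colors}$, weights $w_{v,a}\in\mathrm{Weights}\setminus\{\mathrm{Error}\}$ ($a\in L_v$), and a function $check(v,a,n_1,\ldots,n_q)\in\{\mathrm{True},\mathrm{False}\}$. $\mathcal{N}\in[1,|V(G)|]$ is an integer with $check(v,a,n_1,\ldots,n_q)=check(v,a,\min(\mathcal{N},n_1),\ldots,\min(\mathcal{N},n_q))$ always. $[x,y]=\{x,\ldots,y\}$. $e_G$ is an irredundant clique-width $k$-expression of $G$ (operations $i(v)$, $\oplus$, $\eta_{i,j}$, $\rho_{i\to j}$ renaming label $i$ to $j$; irredundant means no join adds an already existing edge), in which every relabeling $\rho_{i\to j}(e)$ has some vertex of $G_e$ of label $j$. For a subexpression $e$, $G_e$ is its labeled graph and $\ell_e(v)$ the label of $v$ in $G_e$. For $C,N\in[0,\mathcal{N}]^{k\times q}$ (rows = labels, columns = colors), a coloring $c$ of $G_e$ with $c(v)\in L_v$ for all $v$ is a $(C,N)$-coloring of $G_e$ if (C1) $\min(\mathcal{N},|\{v\in V(G_e): c(v)=a,\ \ell_e(v)=i\}|)=C[i,a]$ for all $i,a$;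 and (C2) for all $v\in V(G_e)$, $check(v,c(v),n_1,\ldots,n_q)$ holds with $n_j=\min(\mathcal{N},N[\ell_e(v),a_j]+|\{u\in N_{G_e}(v):c(u)=a_j\}|)$. $\lambda(e,C,N)$ is the minimum of $\circledast_{v\in V(G_e)}w_{v,c(v)}$ over all $(C,N)$-colorings $c$ of $G_e$ ($\mathrm{Error}$ if none). *)

theory Defs
  imports Main
begin

definition weight_structure :: "'w::{linorder,comm_monoid_mult} \<Rightarrow> bool" where
  "weight_structure Err \<longleftrightarrow>
     (\<forall>x. x \<le> Err) \<and> (\<forall>x. x * Err = Err) \<and>
     (\<forall>x y z::'w. x \<le> y \<longrightarrow> x * z \<le> y * z)"

definition wmin :: "'w::linorder \<Rightarrow> 'w set \<Rightarrow> 'w" where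
  "wmin Err S = (if S = {} then Err else Min S)"

datatype 'v cw =
    Vertex nat 'v
  | Union "'v cw" "'v cw"
  | Join nat nat "'v cw"
  | Relabel nat nat "'v cw"

fun verts :: "'v cw \<Rightarrow> 'v set" where
  "verts (Vertex i v) = {v}"
| "verts (Union e1 e2) = verts e1 \<union> verts e2"
| "verts (Join i j e) = verts e"
| "verts (Relabel i j e) = verts e"

fun lab :: "'v cw \<Rightarrow> 'v \<Rightarrow> nat" where
  "lab (Vertex i v) u = i"
| "lab (Union e1 e2) u = (if u \<in> verts e1 then lab e1 u else lab e2 u)"
| "lab (Join i j e) u = lab e u"
| "lab (Relabel i j e) u = (if lab e u = i then j else lab e u)"

fun adj :: "'v cw \<Rightarrow> 'v \<Rightarrow> 'v \<Rightarrow> bool" where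
  "adj (Vertex i v) x y = False"
| "adj (Union e1 e2) x y = (adj e1 x y \<or> adj e2 x y)"
| "adj (Join i j e) x y = (adj e x y \<or>
     (x \<in> verts e \<and> y \<in> verts e \<and>
      ((lab e x = i \<and> lab e y = j) \<or> (lab e x = j \<and> lab e y = i))))"
| "adj (Relabel i j e) x y = adj e x y"

fun subexprs :: "'v cw \<Rightarrow> 'v cw set" where
  "subexprs (Vertex i v) = {Vertex i v}"
| "subexprs (Union e1 e2) = insert (Union e1 e2) (subexprs e1 \<union> subexprs e2)"
| "subexprs (Join i j e) = insert (Join i j e) (subexprs e)"
| "subexprs (Relabel i j e) = insert (Relabel i j e) (subexprs e)"

text \<open>Well-formed irredundant clique-width k-expression in which every
  relabeling rho_{i->j}(e) has a vertex of label j in G_e.\<close>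
fun wf_expr :: "nat \<Rightarrow> 'v cw \<Rightarrow> bool" where
  "wf_expr k (Vertex i v) = (i \<in> {1..k})"
| "wf_expr k (Union e1 e2) = (wf_expr k e1 \<and> wf_expr k e2 \<and> verts e1 \<inter> verts e2 = {})"
| "wf_expr k (Join i j e) = (wf_expr k e \<and> i \<in> {1..k} \<and> j \<in> {1..k} \<and> i \<noteq> j \<and>
     (\<forall>x\<in>verts e. \<forall>y\<in>verts e. lab e x = i \<and> lab e y = j \<longrightarrow> \<not> adj e x y))"
| "wf_expr k (Relabel i j e) = (wf_expr k e \<and> i \<in> {1..k} \<and> j \<in> {1..k} \<and> i \<noteq> j \<and>
     (\<exists>v\<in>verts e. lab e v = j))"

text \<open>Matrices in [0,NN]^{k x q}: rows = labels 1..k, columns = colors;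
  entries outside this index range are fixed to 0 (extensional representation).\<close>
definition mats :: "nat \<Rightarrow> 'c set \<Rightarrow> nat \<Rightarrow> (nat \<Rightarrow> 'c \<Rightarrow> nat) set" where
  "mats k Colors NN = {M. \<forall>i a. (i \<in> {1..k} \<and> a \<in> Colors \<longrightarrow> M i a \<le> NN) \<and>
                               (\<not> (i \<in> {1..k} \<and> a \<in> Colors) \<longrightarrow> M i a = 0)}"

definition cn_coloring ::
  "nat \<Rightarrow> 'c set \<Rightarrow> ('v \<Rightarrow> 'c set) \<Rightarrow> ('v \<Rightarrow> 'c \<Rightarrow> ('c \<Rightarrow> nat) \<Rightarrow> bool) \<Rightarrow> nat
   \<Rightarrow> 'v cw \<Rightarrow> (nat \<Rightarrow> 'c \<Rightarrow> nat) \<Rightarrow> (nat \<Rightarrow> 'c \<Rightarrow> nat) \<Rightarrow> ('v \<Rightarrow> 'c) \<Rightarrow> bool" where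
  "cn_coloring k Colors L check NN e C N c \<longleftrightarrow>
     (\<forall>v\<in>verts e. c v \<in> L v) \<and>
     (\<forall>i\<in>{1..k}. \<forall>a\<in>Colors.
        min NN (card {v \<in> verts e. c v = a \<and> lab e v = i}) = C i a) \<and>
     (\<forall>v\<in>verts e. check v (c v)
        (\<lambda>b. min NN (N (lab e v) b + card {u \<in> verts e. adj e v u \<and> c u = b})))"

definition lam ::
  "'w::{linorder,comm_monoid_mult} \<Rightarrow> nat \<Rightarrow> 'c set \<Rightarrow> ('v \<Rightarrow> 'c set) \<Rightarrow> ('v \<Rightarrow> 'c \<Rightarrow> 'w)
   \<Rightarrow> ('v \<Rightarrow> 'c \<Rightarrow> ('c \<Rightarrow> nat) \<Rightarrow> bool) \<Rightarrow> nat
   \<Rightarrow> 'v cw \<Rightarrow> (nat \<Rightarrow> 'c \<Rightarrow> nat) \<Rightarrow> (nat \<Rightarrow> 'c \<Rightarrow> nat) \<Rightarrow> 'w" where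
  "lam Err k Colors L w check NN e C N =
     wmin Err {\<Prod>v\<in>verts e. w v (c v) | c. cn_coloring k Colors L check NN e C N c}"

end

theory Submission
  imports Defs "HOL-Library.FuncSet"
begin

text \<open>Relabelling i to j merges the colour classes of labels i and j and leaves
  label i empty, while vertices, adjacency and (after redirecting row i of N
  to row j) the check conditions are unchanged. So a (C,N)-colouring of the
  relabelled graph is exactly a colouring of G_e whose count matrix is one of
  the matrices C_e that merge back to C; taking minima over the union of these
  colouring sets gives the recursion.\<close>

lemma min_add_min_min: "min n (min n x + min n y) = min n (x + y :: nat)"
  by auto

lemma le_wmin_iff:
  fixes Err :: "'w::linorder"
  assumes "\<forall>x. x \<le> Err" "finite S"
  shows "y \<le> wmin Err S \<longleftrightarrow> (\<forall>s\<in>S. y \<le> s)"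
  using assms by (simp add: wmin_def)

lemma wmin_in_insert:
  "finite S \<Longrightarrow> wmin Err S \<in> insert Err S"
  by (simp add: wmin_def)

lemma wmin_UN:
  fixes Err :: "'w::linorder"
  assumes top: "\<forall>x. x \<le> Err" and finite: "finite (\<Union>x\<in>P. S x)"
  shows "wmin Err (\<Union>x\<in>P. S x) = wmin Err ((\<lambda>x. wmin Err (S x)) ` P)"
proof -
  have finite_S: "finite (S x)" if "x \<in> P" for x
    using finite that by (meson UN_upper finite_subset)
  have "(\<lambda>x. wmin Err (S x)) ` P \<subseteq> insert Err (\<Union>x\<in>P. S x)"
    using wmin_in_insert[OF finite_S] by blast
  then have finite_mins: "finite ((\<lambda>x. wmin Err (S x)) ` P)"
    using finite by (meson finite.insertI finite_subset)
  have "y \<le> wmin Err (\<Union>x\<in>P. S x) \<longleftrightarrow> y \<le> wmin Err ((\<lambda>x. wmin Err (S x)) ` P)" for y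
    using finite finite_mins finite_S by (simp add: le_wmin_iff[OF top])
  then show ?thesis
    by (meson order.refl order.antisym)
qed

lemma finite_prod_choices:
  assumes "finite V" "\<forall>v\<in>V. finite (A v)"
  shows "finite {\<Prod>v\<in>V. f v (c v) | c. \<forall>v\<in>V. c v \<in> A v}"
proof -
  have "{\<Prod>v\<in>V. f v (c v) | c. \<forall>v\<in>V. c v \<in> A v} \<subseteq> (\<lambda>c. \<Prod>v\<in>V. f v (c v)) ` PiE V A"
  proof
    fix p assume "p \<in> {\<Prod>v\<in>V. f v (c v) | c. \<forall>v\<in>V. c v \<in> A v}"
    then obtain c where "p = (\<Prod>v\<in>V. f v (c v))" "\<forall>v\<in>V. c v \<in> A v" by blast
    then have "p = (\<Prod>v\<in>V. f v (restrict c V v))" "restrict c V \<in> PiE V A" by auto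
    then show "p \<in> (\<lambda>c. \<Prod>v\<in>V. f v (c v)) ` PiE V A" by blast
  qed
  then show ?thesis
    using assms by (meson finite_PiE finite_imageI finite_subset)
qed

lemma finite_verts [simp]: "finite (verts e)"
  by (induction e) auto

lemma subexprs_wf_expr: "e' \<in> subexprs e \<Longrightarrow> wf_expr k e \<Longrightarrow> wf_expr k e'"
  by (induction e) auto

lemma subexprs_verts_subset: "e' \<in> subexprs e \<Longrightarrow> verts e' \<subseteq> verts e"
  by (induction e) auto

abbreviation color_class :: "'v cw \<Rightarrow> ('v \<Rightarrow> 'c) \<Rightarrow> nat \<Rightarrow> 'c \<Rightarrow> 'v set" where
  "color_class e c h a \<equiv> {v \<in> verts e. c v = a \<and> lab e v = h}"

lemma card_color_class_Relabel:
  assumes "i \<noteq> j"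
  shows "card (color_class (Relabel i j e) c h a) =
    (if h = i then 0
     else if h = j then card (color_class e c i a) + card (color_class e c j a)
     else card (color_class e c h a))"
proof -
  consider "h = i" | "h = j" | "h \<noteq> i" "h \<noteq> j" by blast
  then show ?thesis
  proof cases
    case 2
    then have "color_class (Relabel i j e) c h a = color_class e c i a \<union> color_class e c j a"
      by auto
    then show ?thesis
      using 2 assms by (simp add: card_Un_disjoint disjoint_iff)
  qed (use assms in \<open>auto intro: arg_cong[where f = card]\<close>)
qed

definition relabel_splits ::
  "nat \<Rightarrow> 'c set \<Rightarrow> nat \<Rightarrow> nat \<Rightarrow> nat \<Rightarrow> (nat \<Rightarrow> 'c \<Rightarrow> nat) \<Rightarrow> (nat \<Rightarrow> 'c \<Rightarrow> nat) set" where
  "relabel_splits k Colors NN i j C = {Ce \<in> mats k Colors NN.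
     (\<forall>a\<in>Colors. C j a = min NN (Ce i a + Ce j a)) \<and>
     (\<forall>h\<in>{1..k} - {i, j}. \<forall>a\<in>Colors. Ce h a = C h a)}"

lemma relabel_counts_iff:
  assumes ij: "i \<in> {1..k}" "j \<in> {1..k}" "i \<noteq> j"
  shows "(\<forall>h\<in>{1..k}. \<forall>a\<in>Colors. min NN (card (color_class (Relabel i j e) c h a)) = C h a) \<longleftrightarrow>
    (\<forall>a\<in>Colors. C i a = 0) \<and>
    (\<exists>Ce\<in>relabel_splits k Colors NN i j C.
       \<forall>h\<in>{1..k}. \<forall>a\<in>Colors. min NN (card (color_class e c h a)) = Ce h a)"
    (is "?counts \<longleftrightarrow> ?source_empty \<and> ?split")
proof
  assume counts: ?counts
  define Ce where "Ce h a = (if h \<in> {1..k} \<and> a \<in> Colors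
    then min NN (card (color_class e c h a)) else 0)" for h a
  have merged: "\<forall>a\<in>Colors. C j a = min NN (card (color_class e c i a) + card (color_class e c j a))"
    using bspec[OF counts ij(2)] ij(3) unfolding card_color_class_Relabel[OF ij(3)] by auto
  have unchanged: "\<forall>h\<in>{1..k} - {i, j}. \<forall>a\<in>Colors. C h a = min NN (card (color_class e c h a))"
    using counts unfolding card_color_class_Relabel[OF ij(3)] by auto
  have "Ce \<in> relabel_splits k Colors NN i j C"
    using merged unchanged ij unfolding relabel_splits_def mats_def Ce_def
    by (auto simp: min_add_min_min)
  moreover have ?source_empty
    using bspec[OF counts ij(1)] unfolding card_color_class_Relabel[OF ij(3)] by auto
  moreover have "\<forall>h\<in>{1..k}. \<forall>a\<in>Colors. min NN (card (color_class e c h a)) = Ce h a"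
    by (simp add: Ce_def)
  ultimately show "?source_empty \<and> ?split"
    by blast
next
  assume "?source_empty \<and> ?split"
  then obtain Ce where source_empty: ?source_empty
    and Ce: "Ce \<in> relabel_splits k Colors NN i j C"
    and Ce_counts: "\<forall>h\<in>{1..k}. \<forall>a\<in>Colors. min NN (card (color_class e c h a)) = Ce h a"
    by blast
  have "C j a = min NN (card (color_class e c i a) + card (color_class e c j a))"
    if "a \<in> Colors" for a
  proof -
    have "C j a = min NN (Ce i a + Ce j a)"
      using Ce that unfolding relabel_splits_def by blast
    moreover have "Ce i a = min NN (card (color_class e c i a))"
      and "Ce j a = min NN (card (color_class e c j a))"
      using Ce_counts ij that by auto
    ultimately show ?thesis
      by (simp add: min_add_min_min)
  qed
  moreover have "C h a = min NN (card (color_class e c h a))"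
    if "h \<in> {1..k} - {i, j}" "a \<in> Colors" for h a
    using Ce Ce_counts that unfolding relabel_splits_def by auto
  ultimately show ?counts
    using source_empty ij unfolding card_color_class_Relabel[OF ij(3)] by auto
qed

lemma cn_coloring_Relabel_iff:
  assumes "i \<in> {1..k}" "j \<in> {1..k}" "i \<noteq> j"
  shows "cn_coloring k Colors L check NN (Relabel i j e) C N c \<longleftrightarrow>
    (\<forall>a\<in>Colors. C i a = 0) \<and>
    (\<exists>Ce\<in>relabel_splits k Colors NN i j C.
       cn_coloring k Colors L check NN e Ce (\<lambda>h a. if h = i then N j a else N h a) c)"
proof -
  have "N (lab (Relabel i j e) v) = (\<lambda>h a. if h = i then N j a else N h a) (lab e v)" for v
    by auto
  then show ?thesis
    unfolding cn_coloring_def relabel_counts_iff[OF assms] by auto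
qed

definition coloring_weights ::
  "nat \<Rightarrow> 'c set \<Rightarrow> ('v \<Rightarrow> 'c set) \<Rightarrow> ('v \<Rightarrow> 'c \<Rightarrow> 'w::comm_monoid_mult)
   \<Rightarrow> ('v \<Rightarrow> 'c \<Rightarrow> ('c \<Rightarrow> nat) \<Rightarrow> bool) \<Rightarrow> nat
   \<Rightarrow> 'v cw \<Rightarrow> (nat \<Rightarrow> 'c \<Rightarrow> nat) \<Rightarrow> (nat \<Rightarrow> 'c \<Rightarrow> nat) \<Rightarrow> 'w set" where
  "coloring_weights k Colors L w check NN e C N =
     {\<Prod>v\<in>verts e. w v (c v) | c. cn_coloring k Colors L check NN e C N c}"

lemma lam_eq_wmin_coloring_weights:
  "lam Err k Colors L w check NN e C N = wmin Err (coloring_weights k Colors L w check NN e C N)"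
  by (simp add: lam_def coloring_weights_def)

lemma coloring_weights_Relabel:
  assumes "i \<in> {1..k}" "j \<in> {1..k}" "i \<noteq> j"
  shows "coloring_weights k Colors L w check NN (Relabel i j e) C N =
    (if \<forall>a\<in>Colors. C i a = 0
     then \<Union>Ce\<in>relabel_splits k Colors NN i j C.
       coloring_weights k Colors L w check NN e Ce (\<lambda>h a. if h = i then N j a else N h a)
     else {})"
  unfolding coloring_weights_def by (auto simp: cn_coloring_Relabel_iff[OF assms])

lemma finite_UN_coloring_weights:
  assumes "finite Colors" "\<forall>v\<in>verts e. L v \<subseteq> Colors"
  shows "finite (\<Union>C\<in>M. coloring_weights k Colors L w check NN e C N)"
proof -
  have "(\<Union>C\<in>M. coloring_weights k Colors L w check NN e C N) \<subseteq>
      {\<Prod>v\<in>verts e. w v (c v) | c. \<forall>v\<in>verts e. c v \<in> L v}"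
    unfolding coloring_weights_def cn_coloring_def by blast
  moreover have "finite {\<Prod>v\<in>verts e. w v (c v) | c. \<forall>v\<in>verts e. c v \<in> L v}"
    using assms by (intro finite_prod_choices) (auto intro: finite_subset)
  ultimately show ?thesis
    by (rule finite_subset)
qed

theorem lemma5:
  fixes Err :: "'w::{linorder,comm_monoid_mult}"
    and k NN i j :: nat
    and Colors :: "'c set"
    and L :: "'v \<Rightarrow> 'c set"
    and w :: "'v \<Rightarrow> 'c \<Rightarrow> 'w"
    and check :: "'v \<Rightarrow> 'c \<Rightarrow> ('c \<Rightarrow> nat) \<Rightarrow> bool"
    and eG e :: "'v cw"
    and C N :: "nat \<Rightarrow> 'c \<Rightarrow> nat"
  assumes weights: "weight_structure Err"
    and colors: "finite Colors"
    and lists: "\<forall>v\<in>verts eG. L v \<noteq> {} \<and> L v \<subseteq> Colors"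
    and wts: "\<forall>v\<in>verts eG. \<forall>a\<in>L v. w v a \<noteq> Err"
    and NN: "1 \<le> NN" "NN \<le> card (verts eG)"
    and check_sat: "\<forall>v a n. check v a n = check v a (\<lambda>b. min NN (n b))"
    and wf: "wf_expr k eG"
    and sub: "Relabel i j e \<in> subexprs eG"
    and CN: "C \<in> mats k Colors NN" "N \<in> mats k Colors NN"
  shows "lam Err k Colors L w check NN (Relabel i j e) C N =
    (if (\<forall>a\<in>Colors. C i a = 0) then
       wmin Err {lam Err k Colors L w check NN e Ce (\<lambda>h a. if h = i then N j a else N h a) | Ce.
                   Ce \<in> mats k Colors NN \<and>
                   (\<forall>a\<in>Colors. C j a = min NN (Ce i a + Ce j a)) \<and>
                   (\<forall>h\<in>{1..k} - {i, j}. \<forall>a\<in>Colors. Ce h a = C h a)}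
     else Err)"
proof -
  have ij: "i \<in> {1..k}" "j \<in> {1..k}" "i \<noteq> j"
    using subexprs_wf_expr[OF sub wf] by auto
  have top: "\<forall>x. x \<le> Err"
    using weights unfolding weight_structure_def by simp
  have "verts e \<subseteq> verts eG"
    using subexprs_verts_subset[OF sub] by simp
  then have finite: "finite (\<Union>Ce\<in>relabel_splits k Colors NN i j C.
      coloring_weights k Colors L w check NN e Ce (\<lambda>h a. if h = i then N j a else N h a))"
    using lists colors by (intro finite_UN_coloring_weights) auto
  have splits: "{lam Err k Colors L w check NN e Ce (\<lambda>h a. if h = i then N j a else N h a) | Ce.
         Ce \<in> mats k Colors NN \<and>
         (\<forall>a\<in>Colors. C j a = min NN (Ce i a + Ce j a)) \<and>
         (\<forall>h\<in>{1..k} - {i, j}. \<forall>a\<in>Colors. Ce h a = C h a)} =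
      (\<lambda>Ce. wmin Err (coloring_weights k Colors L w check NN e Ce
        (\<lambda>h a. if h = i then N j a else N h a))) ` relabel_splits k Colors NN i j C"
    unfolding lam_eq_wmin_coloring_weights relabel_splits_def by blast
  have "wmin Err {} = Err"
    by (simp add: wmin_def)
  then show ?thesis
    unfolding splits
    unfolding lam_eq_wmin_coloring_weights coloring_weights_Relabel[OF ij]
    by (simp add: wmin_UN[OF top finite])
qed

end
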